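(* Let $t>0$ and let $G$ be a graph containing neither $K_t$ nor $K_{t,t}$ as an induced subgraph. Then $\operatorname{tw}(G)\le 3(R(t,t)-1)\,2^{\operatorname{rw}(G)+1}-1$.
   Context: All graphs are finite and simple. $\operatorname{tw}$ denotes treewidth and $\operatorname{rw}$ denotes rank-width (in the sense of Oum and Seymour). $R(t,t)$ is the Ramsey number: every graph on at least $R(t,t)$ vertices contains a clique or a stable set of size $t$. *)

theory Defs
  imports Main HOL.Vector_Spaces "HOL-Library.Z2" "HOL-Library.Function_Algebras"
begin

definition simple_graph :: "'a set \<Rightarrow> ('a \<Rightarrow> 'a \<Rightarrow> bool) \<Rightarrow> bool" where
  "simple_graph V E \<longleftrightarrow> finite V \<and> (\<forall>x y. E x y \<longrightarrow> x \<in> V \<and> y \<in> V \<and> x \<noteq> y)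
     \<and> (\<forall>x y. E x y \<longrightarrow> E y x)"

definition is_clique :: "('a \<Rightarrow> 'a \<Rightarrow> bool) \<Rightarrow> 'a set \<Rightarrow> bool" where
  "is_clique E S \<longleftrightarrow> (\<forall>x\<in>S. \<forall>y\<in>S. x \<noteq> y \<longrightarrow> E x y)"

definition is_stable :: "('a \<Rightarrow> 'a \<Rightarrow> bool) \<Rightarrow> 'a set \<Rightarrow> bool" where
  "is_stable E S \<longleftrightarrow> (\<forall>x\<in>S. \<forall>y\<in>S. \<not> E x y)"

definition has_induced_Kt :: "'a set \<Rightarrow> ('a \<Rightarrow> 'a \<Rightarrow> bool) \<Rightarrow> nat \<Rightarrow> bool" where
  "has_induced_Kt V E t \<longleftrightarrow> (\<exists>S\<subseteq>V. card S = t \<and> is_clique E S)"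

definition has_induced_Ktt :: "'a set \<Rightarrow> ('a \<Rightarrow> 'a \<Rightarrow> bool) \<Rightarrow> nat \<Rightarrow> bool" where
  "has_induced_Ktt V E t \<longleftrightarrow> (\<exists>A B. A \<subseteq> V \<and> B \<subseteq> V \<and> A \<inter> B = {} \<and> card A = t \<and> card B = t
      \<and> is_stable E A \<and> is_stable E B \<and> (\<forall>a\<in>A. \<forall>b\<in>B. E a b))"

text \<open>Ramsey number R(t,t): least n such that every graph on at least n vertices
  has a clique or a stable set of size t (graphs on natural-number vertices
  represent all finite graphs up to isomorphism).\<close>
definition ramsey_number :: "nat \<Rightarrow> nat" where
  "ramsey_number t = (LEAST n. \<forall>(V::nat set) E. simple_graph V E \<and> card V \<ge> n \<longrightarrow>
      (\<exists>S\<subseteq>V. card S = t \<and> (is_clique E S \<or> is_stable E S)))"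

definition tree_adj :: "nat set set \<Rightarrow> (nat \<times> nat) set" where
  "tree_adj F = {(x, y). {x, y} \<in> F \<and> x \<noteq> y}"

definition is_tree :: "nat set \<Rightarrow> nat set set \<Rightarrow> bool" where
  "is_tree N F \<longleftrightarrow> finite N \<and> N \<noteq> {}
     \<and> (\<forall>e\<in>F. \<exists>x y. e = {x, y} \<and> x \<in> N \<and> y \<in> N \<and> x \<noteq> y)
     \<and> (\<forall>x\<in>N. \<forall>y\<in>N. (x, y) \<in> (tree_adj F)\<^sup>*)
     \<and> card F = card N - 1"

definition tree_connected_subset :: "nat set set \<Rightarrow> nat set \<Rightarrow> bool" where
  "tree_connected_subset F X \<longleftrightarrow>
     (\<forall>x\<in>X. \<forall>y\<in>X. (x, y) \<in> (tree_adj F \<inter> (X \<times> X))\<^sup>*)"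

definition tree_degree :: "nat set set \<Rightarrow> nat \<Rightarrow> nat" where
  "tree_degree F x = card {e\<in>F. x \<in> e}"

definition is_tree_decomposition ::
  "'a set \<Rightarrow> ('a \<Rightarrow> 'a \<Rightarrow> bool) \<Rightarrow> nat set \<Rightarrow> nat set set \<Rightarrow> (nat \<Rightarrow> 'a set) \<Rightarrow> bool" where
  "is_tree_decomposition V E N F bag \<longleftrightarrow> is_tree N F
     \<and> (\<forall>x\<in>N. bag x \<subseteq> V)
     \<and> (\<forall>v\<in>V. \<exists>x\<in>N. v \<in> bag x)
     \<and> (\<forall>u v. E u v \<longrightarrow> (\<exists>x\<in>N. u \<in> bag x \<and> v \<in> bag x))
     \<and> (\<forall>v\<in>V. tree_connected_subset F {x\<in>N. v \<in> bag x})"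

definition td_width :: "nat set \<Rightarrow> (nat \<Rightarrow> 'a set) \<Rightarrow> int" where
  "td_width N bag = int (Max ((\<lambda>x. card (bag x)) ` N)) - 1"

definition treewidth :: "'a set \<Rightarrow> ('a \<Rightarrow> 'a \<Rightarrow> bool) \<Rightarrow> int" where
  "treewidth V E = Min {td_width N bag | N F bag. is_tree_decomposition V E N F bag}"

text \<open>Cut-rank: the rank over GF(2) of the X \<times> (V - X) adjacency submatrix,
  i.e. the dimension of the GF(2)-span of its rows.\<close>
definition cut_rank :: "'a set \<Rightarrow> ('a \<Rightarrow> 'a \<Rightarrow> bool) \<Rightarrow> 'a set \<Rightarrow> nat" where
  "cut_rank V E X = vector_space.dim (\<lambda>(c::bit) (f::'a \<Rightarrow> bit). \<lambda>y. c * f y)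
     ((\<lambda>x. \<lambda>y. if y \<in> V - X \<and> E x y then 1 else 0) ` X)"

definition tree_leaves :: "nat set \<Rightarrow> nat set set \<Rightarrow> nat set" where
  "tree_leaves N F = {x\<in>N. tree_degree F x = 1}"

definition tree_side :: "nat set set \<Rightarrow> nat set \<Rightarrow> nat \<Rightarrow> nat set" where
  "tree_side F e a = {y. (a, y) \<in> (tree_adj (F - {e}))\<^sup>*}"

definition is_rank_decomposition ::
  "'a set \<Rightarrow> nat set \<Rightarrow> nat set set \<Rightarrow> ('a \<Rightarrow> nat) \<Rightarrow> bool" where
  "is_rank_decomposition V N F L \<longleftrightarrow> is_tree N F \<and> card N \<ge> 2
     \<and> (\<forall>x\<in>N. tree_degree F x \<le> 3)
     \<and> bij_betw L V (tree_leaves N F)"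

text \<open>Width of edge e = {a,b}: cut-rank of the vertices whose leaves lie on a's side.
  (Cut-rank is symmetric, so the choice of side is immaterial.)\<close>
definition rd_width ::
  "'a set \<Rightarrow> ('a \<Rightarrow> 'a \<Rightarrow> bool) \<Rightarrow> nat set set \<Rightarrow> ('a \<Rightarrow> nat) \<Rightarrow> nat" where
  "rd_width V E F L = Max ((\<lambda>e. cut_rank V E {v\<in>V. L v \<in> tree_side F e (SOME a. a \<in> e)}) ` F)"

definition rankwidth :: "'a set \<Rightarrow> ('a \<Rightarrow> 'a \<Rightarrow> bool) \<Rightarrow> nat" where
  "rankwidth V E = (if card V \<le> 1 then 0
     else Min {rd_width V E F L | N F L. is_rank_decomposition V N F L})"

end

(*
  Fix a rank decomposition of width k and write R = R(t,t). For a tree edge e and a vertex v, the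
  twin class of v at e consists of the vertices on the side of e containing the leaf of v that have
  the same neighbourhood across e as v; a cut of rank k has at most 2^k such neighbourhoods.
  Put v into the bag of a node x iff all twin classes of v along the path from its leaf to x
  have fewer than R elements. These nodes form a subtree. For an edge uv and a tree edge e
  separating their leaves, the twin classes of u and v at e cannot both be large: by Ramsey's
  theorem and K_t-freeness each would contain a stable t-set, and the two sets would be complete
  to each other, an induced K_{t,t}. Hence the subtrees of u and v meet. A node of degree at most
  3 receives at most one vertex with that leaf and, through each incident edge, at most
  (R - 1) 2^k vertices with small twin classes, so bags have at most 1 + 3 (R - 1) 2^k elements.
*)

theory Submission
  imports Defs "HOL-Library.Ramsey" "HOL-Library.FuncSet"
begin

section \<open>Trees\<close>

lemma sym_tree_adj: "sym (tree_adj F)"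
  by (auto simp: tree_adj_def sym_def insert_commute)

lemma tree_reach_sym: "(x, y) \<in> (tree_adj F)\<^sup>* \<Longrightarrow> (y, x) \<in> (tree_adj F)\<^sup>*"
  using sym_rtrancl[OF sym_tree_adj] by (auto simp: sym_def)

lemma tree_reach_mono: "F \<subseteq> F' \<Longrightarrow> (x, y) \<in> (tree_adj F)\<^sup>* \<Longrightarrow> (x, y) \<in> (tree_adj F')\<^sup>*"
  using rtrancl_mono[of "tree_adj F" "tree_adj F'"] by (auto simp: tree_adj_def)

lemma rtrancl_Un_sym_pair_cases:
  assumes "(p, q) \<in> (R \<union> {(x, y), (y, x)})\<^sup>*"
  shows "(p, q) \<in> R\<^sup>* \<or> ((p, x) \<in> R\<^sup>* \<or> (p, y) \<in> R\<^sup>*) \<and> ((x, q) \<in> R\<^sup>* \<or> (y, q) \<in> R\<^sup>*)"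
  using assms
proof (induction rule: rtrancl_induct)
  case (step q q')
  from step.hyps(2) show ?case
  proof
    assume "(q, q') \<in> R"
    with step.IH show ?thesis by (meson rtrancl_into_rtrancl)
  next
    assume "(q, q') \<in> {(x, y), (y, x)}"
    with step.IH show ?thesis by auto
  qed
qed simp

lemma tree_adj_insert_subset: "tree_adj (insert {a, b} F) \<subseteq> tree_adj F \<union> {(a, b), (b, a)}"
  by (auto simp: tree_adj_def doubleton_eq_iff)

lemma tree_adj_insert_non_doubleton: "\<nexists>a b. e = {a, b} \<Longrightarrow> tree_adj (insert e F) = tree_adj F"
  by (auto simp: tree_adj_def)

lemma tree_adj_subset_remove: "tree_adj F \<subseteq> tree_adj (F - {{a, b}}) \<union> {(a, b), (b, a)}"
  by (auto simp: tree_adj_def doubleton_eq_iff)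

text \<open>A graph with edge set \<open>F\<close> on the nodes \<open>N\<close> has at least \<open>card N - card F\<close> components.\<close>

lemma exists_pairwise_unreachable_subset:
  assumes "finite F" "finite N"
  shows "\<exists>D \<subseteq> N. card N \<le> card D + card F \<and>
           (\<forall>d1\<in>D. \<forall>d2\<in>D. (d1, d2) \<in> (tree_adj F)\<^sup>* \<longrightarrow> d1 = d2)"
  using assms(1)
proof (induction F rule: finite_induct)
  case empty
  have "tree_adj {} = {}" by (simp add: tree_adj_def)
  then show ?case by (intro exI[of _ N]) auto
next
  case (insert e F)
  obtain D where D: "D \<subseteq> N" "card N \<le> card D + card F"
    "\<forall>d1\<in>D. \<forall>d2\<in>D. (d1, d2) \<in> (tree_adj F)\<^sup>* \<longrightarrow> d1 = d2"
    using insert.IH by blast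
  have card_insert: "card (insert e F) = card F + 1" using insert.hyps by simp
  show ?case
  proof (cases "\<exists>a b. e = {a, b}")
    case False
    then show ?thesis
      using D card_insert tree_adj_insert_non_doubleton[OF False] by (intro exI[of _ D]) auto
  next
    case True
    then obtain a b where e: "e = {a, b}" by blast
    let ?R = "tree_adj F"
    \<comment> \<open>The new edge merges at most one class of \<open>D\<close>, namely the one reaching \<open>a\<close>, into another.\<close>
    define S where "S = {d\<in>D. (d, a) \<in> ?R\<^sup>*}"
    have finD: "finite D" using D(1) assms(2) finite_subset by blast
    have "card S \<le> 1"
    proof -
      have "s1 = s2" if s: "s1 \<in> S" "s2 \<in> S" for s1 s2
      proof -
        have "(s1, a) \<in> ?R\<^sup>*" "(a, s2) \<in> ?R\<^sup>*" using s unfolding S_def using tree_reach_sym by auto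
        then have "(s1, s2) \<in> ?R\<^sup>*" by (rule rtrancl_trans)
        then show "s1 = s2" using D(3) s unfolding S_def by blast
      qed
      moreover have "finite S" using finD S_def by auto
      ultimately show ?thesis by (auto simp: card_le_Suc0_iff_eq)
    qed
    moreover have "card (D - S) = card D - card S"
      by (rule card_Diff_subset) (use finD S_def in auto)
    ultimately have card_le: "card N \<le> card (D - S) + card (insert e F)"
      using D(2) card_insert by linarith
    have "d1 = d2" if d: "d1 \<in> D - S" "d2 \<in> D - S" "(d1, d2) \<in> (tree_adj (insert e F))\<^sup>*"
      for d1 d2
    proof -
      have "(d1, d2) \<in> (?R \<union> {(a, b), (b, a)})\<^sup>*"
        using rtrancl_mono[OF tree_adj_insert_subset[of a b F]] e d(3) by auto
      then have cases: "(d1, d2) \<in> ?R\<^sup>* \<or> ((d1, a) \<in> ?R\<^sup>* \<or> (d1, b) \<in> ?R\<^sup>*) \<and>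
                         ((a, d2) \<in> ?R\<^sup>* \<or> (b, d2) \<in> ?R\<^sup>*)"
        by (rule rtrancl_Un_sym_pair_cases)
      have "(d1, a) \<notin> ?R\<^sup>*" "(a, d2) \<notin> ?R\<^sup>*"
        using d(1,2) tree_reach_sym unfolding S_def by blast+
      with cases have "(d1, d2) \<in> ?R\<^sup>*" by (meson rtrancl_trans)
      then show "d1 = d2" using D(3) d(1,2) by blast
    qed
    moreover have "D - S \<subseteq> N" using D(1) by blast
    ultimately show ?thesis using card_le by blast
  qed
qed

lemma tree_edges_subset_Pow: "is_tree N F \<Longrightarrow> F \<subseteq> Pow N"
  by (force simp: is_tree_def)

lemma finite_tree_edges: "is_tree N F \<Longrightarrow> finite F"
  using tree_edges_subset_Pow by (metis finite_Pow_iff is_tree_def rev_finite_subset)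

lemma tree_edgeE:
  assumes "is_tree N F" "e \<in> F"
  obtains a b where "e = {a, b}" "a \<in> N" "b \<in> N" "a \<noteq> b"
  using assms unfolding is_tree_def by blast

lemma tree_reach: "is_tree N F \<Longrightarrow> x \<in> N \<Longrightarrow> y \<in> N \<Longrightarrow> (x, y) \<in> (tree_adj F)\<^sup>*"
  by (auto simp: is_tree_def)

lemma tree_edge_other_endE:
  assumes "is_tree N F" "e \<in> F" "x \<in> e"
  obtains y where "e = {x, y}" "y \<in> N" "x \<noteq> y"
proof -
  obtain a b where ab: "e = {a, b}" "a \<in> N" "b \<in> N" "a \<noteq> b" using tree_edgeE[OF assms(1,2)] .
  show thesis
  proof (cases "x = a")
    case True
    then show ?thesis using that ab by blast
  next
    case False
    then show ?thesis using that ab assms(3) by (metis insert_commute insertE singletonD)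
  qed
qed

abbreviation reach_without :: "nat set set \<Rightarrow> nat set \<Rightarrow> (nat \<times> nat) set" where
  "reach_without F e \<equiv> (tree_adj (F - {e}))\<^sup>*"

lemma reach_without_edge: "{x, y} \<in> F \<Longrightarrow> x \<noteq> y \<Longrightarrow> {x, y} \<noteq> e \<Longrightarrow> (x, y) \<in> reach_without F e"
  by (simp add: tree_adj_def r_into_rtrancl)

lemma tree_remove_edge_separates:
  assumes T: "is_tree N F" and ab: "{a, b} \<in> F" "a \<noteq> b"
  shows "(a, b) \<notin> reach_without F {a, b}"
proof
  assume ab_reach: "(a, b) \<in> reach_without F {a, b}"
  let ?R = "tree_adj (F - {{a, b}})"
  have "tree_adj F \<subseteq> ?R\<^sup>*"
    using tree_adj_subset_remove[of F a b] ab_reach tree_reach_sym[OF ab_reach] by blast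
  then have reach_sub: "(tree_adj F)\<^sup>* \<subseteq> ?R\<^sup>*" by (rule rtrancl_subset_rtrancl)
  have finN: "finite N" and finF: "finite F" using T finite_tree_edges unfolding is_tree_def by blast+
  have "{a, b} \<subseteq> N" using tree_edges_subset_Pow[OF T] ab by auto
  then have "card {a, b} \<le> card N" using finN card_mono by blast
  then have card_N: "card N \<ge> 2" using ab by simp
  have "card F = card N - 1" using T unfolding is_tree_def by blast
  then have card_F: "card (F - {{a, b}}) = card N - 2"
    using ab finF by (simp add: card_Diff_singleton)
  \<comment> \<open>With only \<open>card N - 2\<close> edges left, \<open>F - {{a, b}}\<close> cannot connect all nodes.\<close>
  obtain D where D: "D \<subseteq> N" "card N \<le> card D + card (F - {{a, b}})"
    "\<forall>d1\<in>D. \<forall>d2\<in>D. (d1, d2) \<in> ?R\<^sup>* \<longrightarrow> d1 = d2"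
    using exists_pairwise_unreachable_subset[of "F - {{a, b}}" N] finF finN by blast
  have "\<forall>d1\<in>D. \<forall>d2\<in>D. d1 = d2"
    using D(1,3) tree_reach[OF T] reach_sub by blast
  moreover have "finite D" using finN D(1) finite_subset by blast
  ultimately have "card D \<le> 1" using card_le_Suc0_iff_eq[of D] by auto
  then show False using D(2) card_F card_N by linarith
qed

lemma tree_remove_edge_reaches_endpoint:
  assumes T: "is_tree N F" and ab: "{a, b} \<in> F" and z: "z \<in> N"
  shows "(a, z) \<in> reach_without F {a, b} \<or> (b, z) \<in> reach_without F {a, b}"
proof -
  have "a \<in> N" using tree_edges_subset_Pow[OF T] ab by auto
  then have "(a, z) \<in> (tree_adj F)\<^sup>*" using tree_reach[OF T] z by auto
  then have "(a, z) \<in> (tree_adj (F - {{a, b}}) \<union> {(a, b), (b, a)})\<^sup>*"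
    using rtrancl_mono[OF tree_adj_subset_remove[of F a b]] by blast
  from rtrancl_Un_sym_pair_cases[OF this] show ?thesis by auto
qed

lemma reach_without_if_endpoints_unreachable:
  assumes "(d, y) \<in> (tree_adj F)\<^sup>*" "\<forall>z\<in>e. (d, z) \<notin> (tree_adj F)\<^sup>*"
  shows "(d, y) \<in> reach_without F e"
  using assms(1)
proof (induction rule: rtrancl_induct)
  case (step y y')
  then have "y \<notin> e" using assms(2) by auto
  then have "(y, y') \<in> tree_adj (F - {e})" using step.hyps(2) by (auto simp: tree_adj_def)
  then show ?case using step.IH by (meson rtrancl_into_rtrancl)
qed simp

lemma tree_side_nested:
  assumes ab: "{a, b} \<in> F" "a \<noteq> b" "{a, b} \<noteq> g" and a: "a \<notin> tree_side F g p"
  shows "tree_side F g p \<subseteq> tree_side F {a, b} p"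
proof
  fix y assume y: "y \<in> tree_side F g p"
  have "(a, b) \<in> reach_without F g" using reach_without_edge[OF ab] .
  then have "(p, b) \<notin> reach_without F g"
    using a tree_reach_sym[of a b] rtrancl_trans[of p b _ a] unfolding tree_side_def by blast
  then have "(p, y) \<in> reach_without (F - {g}) {a, b}"
    using a y reach_without_if_endpoints_unreachable[of p y "F - {g}" "{a, b}"]
    unfolding tree_side_def by blast
  then show "y \<in> tree_side F {a, b} p"
    using tree_reach_mono[of "F - {g} - {{a, b}}" "F - {{a, b}}"] unfolding tree_side_def by blast
qed

lemma tree_reach_in_nodes:
  assumes T: "is_tree N F" and "F' \<subseteq> F" "p \<in> N" "(p, y) \<in> (tree_adj F')\<^sup>*"
  shows "y \<in> N"
  using assms(4)
proof induction
  case (step y z)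
  then have "{y, z} \<in> F" using assms(2) by (auto simp: tree_adj_def)
  then show ?case using tree_edges_subset_Pow[OF T] by auto
qed (rule assms(3))

lemma separating_edge_atE:
  assumes T: "is_tree N F" and "x \<in> N" "y \<in> N" "x \<noteq> y"
  obtains e where "e \<in> F" "x \<in> e" "(x, y) \<notin> reach_without F e"
proof -
  have "y \<noteq> x \<longrightarrow> (\<exists>e\<in>F. x \<in> e \<and> (x, y) \<notin> reach_without F e)"
    using tree_reach[OF assms(1-3)]
  proof (induction rule: rtrancl_induct)
    case (step y0 y)
    show ?case
    proof
      assume yx: "y \<noteq> x"
      have y0y: "{y0, y} \<in> F" "y0 \<noteq> y" using step.hyps(2) unfolding tree_adj_def by auto
      show "\<exists>e\<in>F. x \<in> e \<and> (x, y) \<notin> reach_without F e"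
      proof (cases "y0 = x")
        case True
        then show ?thesis using tree_remove_edge_separates[OF T y0y] y0y by blast
      next
        case False
        then obtain e where e: "e \<in> F" "x \<in> e" "(x, y0) \<notin> reach_without F e"
          using step.IH by blast
        have "e \<noteq> {y0, y}" using e(2) False yx by blast
        then have "(y, y0) \<in> reach_without F e"
          using reach_without_edge[OF y0y] tree_reach_sym by blast
        then have "(x, y) \<notin> reach_without F e" using e(3) rtrancl_trans[of x y _ y0] by blast
        then show ?thesis using e by blast
      qed
    qed
  qed simp
  then show ?thesis using that assms(4) by blast
qed

definition separating_edges :: "nat set set \<Rightarrow> nat \<Rightarrow> nat \<Rightarrow> nat set set" where
  "separating_edges F p x = {e\<in>F. (p, x) \<notin> reach_without F e}"

lemma separating_edges_psubset:
  assumes T: "is_tree N F" and p: "p \<in> N" and e: "e = {x, x'}" "e \<in> F" "x \<noteq> x'"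
    and xp: "(x, p) \<notin> reach_without F e"
  shows "separating_edges F p x' \<subset> separating_edges F p x"
proof -
  have "(x, p) \<in> reach_without F e \<or> (x', p) \<in> reach_without F e"
    using tree_remove_edge_reaches_endpoint[OF T _ p, of x x'] e by blast
  then have x'p: "(x', p) \<in> reach_without F e" using xp by blast
  have "g \<in> separating_edges F p x" if g: "g \<in> separating_edges F p x'" for g
  proof -
    have "g \<in> F" and px': "(p, x') \<notin> reach_without F g"
      using g unfolding separating_edges_def by auto
    moreover have "g \<noteq> e" using px' x'p tree_reach_sym by blast
    then have "(x, x') \<in> reach_without F g" using reach_without_edge e by blast
    ultimately show ?thesis using rtrancl_trans[of p x _ x'] unfolding separating_edges_def by blast
  qed
  moreover have "e \<in> separating_edges F p x" "e \<notin> separating_edges F p x'"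
    using e xp x'p tree_reach_sym unfolding separating_edges_def by blast+
  ultimately show ?thesis by blast
qed

lemma tree_connected_subset_separating_edges:
  assumes T: "is_tree N F" and p: "p \<in> N"
  shows "tree_connected_subset F {x\<in>N. \<forall>e\<in>separating_edges F p x. P e}"
proof -
  define S where "S = {x\<in>N. \<forall>e\<in>separating_edges F p x. P e}"
  let ?S = "tree_adj F \<inter> (S \<times> S)"
  have reach_p: "(x, p) \<in> ?S\<^sup>*" if "x \<in> S" for x
    using that
  proof (induction "card (separating_edges F p x)" arbitrary: x rule: less_induct)
    case less
    show ?case
    proof (cases "x = p")
      case False
      have "x \<in> N" using less.prems unfolding S_def by blast
      then obtain e where e: "e \<in> F" "x \<in> e" "(x, p) \<notin> reach_without F e"
        using separating_edge_atE[OF T _ p False] by blast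
      then obtain x' where x': "e = {x, x'}" "x' \<in> N" "x \<noteq> x'"
        using tree_edge_other_endE[OF T] by blast
      have sub: "separating_edges F p x' \<subset> separating_edges F p x"
        using separating_edges_psubset[OF T p x'(1) e(1) x'(3) e(3)] .
      moreover have "finite (separating_edges F p x)"
        using finite_tree_edges[OF T] unfolding separating_edges_def by simp
      ultimately have "card (separating_edges F p x') < card (separating_edges F p x)"
        by (rule psubset_card_mono[rotated])
      moreover have x'S: "x' \<in> S" using less.prems sub x'(2) unfolding S_def by blast
      ultimately have "(x', p) \<in> ?S\<^sup>*" using less.hyps by blast
      moreover have "(x, x') \<in> ?S"
        using e(1) x'(1,3) x'S less.prems unfolding tree_adj_def by blast
      ultimately show ?thesis by (rule converse_rtrancl_into_rtrancl[rotated])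
    qed simp
  qed
  have "sym (?S\<^sup>*)"
    using sym_tree_adj[of F] by (intro sym_rtrancl) (auto simp: sym_def)
  then show ?thesis
    unfolding tree_connected_subset_def S_def[symmetric]
    using reach_p by (meson rtrancl_trans symD)
qed

lemma tree_edge_orientE:
  assumes T: "is_tree N F" and "e \<in> F" "p \<in> N"
  obtains a b where "e = {a, b}" "a \<noteq> b" "(p, a) \<in> reach_without F e"
proof -
  obtain c d where cd: "e = {c, d}" "c \<noteq> d" using tree_edgeE[OF T assms(2)] by blast
  then have "(c, p) \<in> reach_without F e \<or> (d, p) \<in> reach_without F e"
    using tree_remove_edge_reaches_endpoint[OF T _ assms(3), of c d] assms(2) by blast
  then show ?thesis
  proof
    assume "(c, p) \<in> reach_without F e"
    then show ?thesis using that[of c d] cd tree_reach_sym by blast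
  next
    assume "(d, p) \<in> reach_without F e"
    then show ?thesis using that[of d c] cd tree_reach_sym by (simp add: insert_commute)
  qed
qed

lemma finite_tree_side:
  assumes T: "is_tree N F" and "p \<in> N"
  shows "finite (tree_side F e p)"
proof -
  have "tree_side F e p \<subseteq> N"
    using tree_reach_in_nodes[OF T, of "F - {e}" p] assms(2) unfolding tree_side_def by blast
  then show ?thesis using T finite_subset unfolding is_tree_def by blast
qed

lemma tree_side_psubset_if_separating:
  assumes ab: "{a, b} \<in> F" "a \<noteq> b" "(p, a) \<in> reach_without F {a, b}"
    and g: "g \<in> separating_edges F p a"
  shows "tree_side F g p \<subset> tree_side F {a, b} p"
proof -
  have "a \<notin> tree_side F g p" "{a, b} \<noteq> g"
    using g ab(3) unfolding separating_edges_def tree_side_def by auto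
  then show ?thesis
    using tree_side_nested[OF ab(1,2)] ab(3) unfolding tree_side_def by blast
qed

section \<open>Caterpillars\<close>

text \<open>A caterpillar: leaves \<open>i < n\<close>, each attached to the spine node \<open>n + i\<close> of the path
  \<open>n, \<dots>, 2 * n - 1\<close>.\<close>

definition caterpillar_edges :: "nat \<Rightarrow> nat set set" where
  "caterpillar_edges n = (\<lambda>i. {i, n + i}) ` {..<n} \<union> (\<lambda>i. {n + i, Suc (n + i)}) ` {..<n - 1}"

lemma mem_caterpillar_edges:
  "e \<in> caterpillar_edges n \<longleftrightarrow> (\<exists>i<n. e = {i, n + i}) \<or> (\<exists>i. Suc i < n \<and> e = {n + i, Suc (n + i)})"
  unfolding caterpillar_edges_def by (auto simp: less_diff_conv)

lemma caterpillar_edgeE: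
  assumes "e \<in> caterpillar_edges n"
  obtains x y where "e = {x, y}" "x < 2 * n" "y < 2 * n" "x \<noteq> y"
proof -
  consider i where "i < n" "e = {i, n + i}" | i where "Suc i < n" "e = {n + i, Suc (n + i)}"
    using assms unfolding mem_caterpillar_edges by blast
  then show ?thesis
  proof cases
    case (1 i)
    then show ?thesis using that[of i "n + i"] by auto
  next
    case (2 i)
    then show ?thesis using that[of "n + i" "Suc (n + i)"] by auto
  qed
qed

lemma caterpillar_reach_spine_start:
  assumes "x < 2 * n"
  shows "(x, n) \<in> (tree_adj (caterpillar_edges n))\<^sup>*"
proof -
  let ?F = "caterpillar_edges n"
  have spine: "(n + i, n) \<in> (tree_adj ?F)\<^sup>*" if "i < n" for i
    using that
  proof (induction i)
    case (Suc i)
    have "{n + i, Suc (n + i)} \<in> ?F" using mem_caterpillar_edges Suc.prems by blast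
    then have "(n + Suc i, n + i) \<in> tree_adj ?F" unfolding tree_adj_def by (simp add: insert_commute)
    then show ?case using Suc by (simp add: converse_rtrancl_into_rtrancl)
  qed simp
  show ?thesis
  proof (cases "x < n")
    case True
    have "{x, n + x} \<in> ?F" using mem_caterpillar_edges True by blast
    then have "(x, n + x) \<in> tree_adj ?F" unfolding tree_adj_def using True by simp
    then show ?thesis using spine True by (meson converse_rtrancl_into_rtrancl)
  next
    case False
    then have "x = n + (x - n)" "x - n < n" using assms by auto
    then show ?thesis using spine by metis
  qed
qed

lemma card_caterpillar_edges: "n \<ge> 1 \<Longrightarrow> card (caterpillar_edges n) = 2 * n - 1"
proof -
  assume "n \<ge> 1"
  have inj_legs: "inj_on (\<lambda>i. {i, n + i}) {..<n}"
    and inj_spine: "inj_on (\<lambda>i. {n + i, Suc (n + i)}) {..<n - 1}"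
    unfolding inj_on_def by (auto simp: doubleton_eq_iff)
  have "(\<lambda>i. {i, n + i}) ` {..<n} \<inter> (\<lambda>i. {n + i, Suc (n + i)}) ` {..<n - 1} = {}"
    by (auto simp: doubleton_eq_iff)
  then show ?thesis
    unfolding caterpillar_edges_def using card_image[OF inj_legs] card_image[OF inj_spine] \<open>n \<ge> 1\<close>
    by (simp add: card_Un_disjoint)
qed

lemma is_tree_caterpillar:
  assumes "n \<ge> 1"
  shows "is_tree {..<2 * n} (caterpillar_edges n)"
proof -
  have "\<forall>e\<in>caterpillar_edges n. \<exists>x y. e = {x, y} \<and> x \<in> {..<2 * n} \<and> y \<in> {..<2 * n} \<and> x \<noteq> y"
    by (metis caterpillar_edgeE lessThan_iff)
  moreover have "(x, y) \<in> (tree_adj (caterpillar_edges n))\<^sup>*" if "x < 2 * n" "y < 2 * n" for x y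
    using caterpillar_reach_spine_start[OF that(1)] tree_reach_sym[OF caterpillar_reach_spine_start[OF that(2)]]
    by (rule rtrancl_trans)
  ultimately show ?thesis
    unfolding is_tree_def using card_caterpillar_edges assms by (auto simp: lessThan_empty_iff)
qed

lemma caterpillar_edges_at_leaf: "x < n \<Longrightarrow> {e\<in>caterpillar_edges n. x \<in> e} = {{x, n + x}}"
  unfolding mem_caterpillar_edges by auto

lemma caterpillar_edges_at_spine:
  "n \<le> x \<Longrightarrow> {e\<in>caterpillar_edges n. x \<in> e} \<subseteq> {{x - n, x}, {x - 1, x}, {x, Suc x}}"
  unfolding mem_caterpillar_edges by (auto simp: insert_commute)

lemma tree_degree_caterpillar: "tree_degree (caterpillar_edges n) x \<le> 3"
proof (cases "x < n")
  case True
  then show ?thesis unfolding tree_degree_def by (simp add: caterpillar_edges_at_leaf)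
next
  case False
  then have "tree_degree (caterpillar_edges n) x \<le> card {{x - n, x}, {x - 1, x}, {x, Suc x}}"
    unfolding tree_degree_def using caterpillar_edges_at_spine by (intro card_mono) auto
  also have "\<dots> \<le> 3" by (simp add: card_insert_if)
  finally show ?thesis .
qed

lemma tree_leaves_caterpillar:
  assumes "n \<ge> 2"
  shows "tree_leaves {..<2 * n} (caterpillar_edges n) = {..<n}"
proof -
  have spine_degree: "tree_degree (caterpillar_edges n) x \<ge> 2" if "n \<le> x" "x < 2 * n" for x
  proof -
    \<comment> \<open>Every spine node has its leg and at least one spine neighbour.\<close>
    define j where "j = x - n"
    have j: "x = n + j" "j < n" using that unfolding j_def by auto
    define e where "e = (if Suc j < n then {x, Suc x} else {x - 1, x})"
    have "e \<in> caterpillar_edges n"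
    proof (cases "Suc j < n")
      case True
      then show ?thesis unfolding e_def mem_caterpillar_edges using j by (intro disjI2 exI[of _ j]) simp
    next
      case False
      then have "Suc (j - 1) < n" "e = {n + (j - 1), Suc (n + (j - 1))}"
        unfolding e_def using j assms by auto
      then show ?thesis unfolding mem_caterpillar_edges by blast
    qed
    moreover have "{j, x} \<in> caterpillar_edges n" using j mem_caterpillar_edges by blast
    moreover have "x \<in> e" by (simp add: e_def)
    ultimately have "{{j, x}, e} \<subseteq> {e\<in>caterpillar_edges n. x \<in> e}" by blast
    moreover have "finite (caterpillar_edges n)" unfolding caterpillar_edges_def by simp
    ultimately have "card {{j, x}, e} \<le> tree_degree (caterpillar_edges n) x"
      unfolding tree_degree_def by (intro card_mono) auto
    moreover have "{j, x} \<noteq> e" unfolding e_def using j assms by (auto simp: doubleton_eq_iff)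
    ultimately show ?thesis by simp
  qed
  have leaf_degree: "tree_degree (caterpillar_edges n) x = 1" if "x < n" for x
    unfolding tree_degree_def using that by (simp add: caterpillar_edges_at_leaf)
  show ?thesis
  proof (intro set_eqI iffI)
    fix x assume "x \<in> tree_leaves {..<2 * n} (caterpillar_edges n)"
    then show "x \<in> {..<n}"
      using spine_degree[of x] unfolding tree_leaves_def by (cases "x < n") auto
  next
    fix x assume "x \<in> {..<n}"
    then show "x \<in> tree_leaves {..<2 * n} (caterpillar_edges n)"
      using leaf_degree[of x] unfolding tree_leaves_def by simp
  qed
qed

lemma rank_decomposition_exists:
  assumes "finite V" "card V \<ge> 2"
  shows "\<exists>N F (L::'a \<Rightarrow> nat). is_rank_decomposition V N F L"
proof -
  obtain L where "bij_betw L V {..<card V}"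
    using ex_bij_betw_finite_nat[OF assms(1)] atLeast0LessThan by metis
  then have "is_rank_decomposition V {..<2 * card V} (caterpillar_edges (card V)) L"
    unfolding is_rank_decomposition_def
    using assms is_tree_caterpillar tree_degree_caterpillar tree_leaves_caterpillar by simp
  then show ?thesis by blast
qed

section \<open>Cut-rank over GF(2)\<close>

text \<open>Bit arithmetic is kept in ring form (not rewritten to \<open>and\<close>/\<open>xor\<close>) so that linear
  combinations stay recognisable.\<close>

declare mult_bit_eq_and [simp del] add_bit_eq_xor [simp del]

interpretation bit_fun: vector_space "\<lambda>(c::bit) (f::'a \<Rightarrow> bit). \<lambda>y. c * f y"
  by unfold_locales (auto simp: fun_eq_iff algebra_simps)

definition cut_row :: "'a set \<Rightarrow> ('a \<Rightarrow> 'a \<Rightarrow> bool) \<Rightarrow> 'a set \<Rightarrow> 'a \<Rightarrow> 'a \<Rightarrow> bit" where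
  "cut_row V E X x = (\<lambda>y. if y \<in> V - X \<and> E x y then 1 else 0)"

lemma cut_rank_eq_dim: "cut_rank V E X = bit_fun.dim (cut_row V E X ` X)"
  unfolding cut_rank_def cut_row_def ..

lemma cut_row_eq_adj:
  assumes "cut_row V E A w = cut_row V E A u" "z \<in> V - A" "E u z"
  shows "E w z"
  using fun_cong[OF assms(1), of z] assms(2,3) unfolding cut_row_def by (simp split: if_splits)

lemma cut_rank_le_card:
  assumes "finite X"
  shows "cut_rank V E X \<le> card X"
proof -
  have "bit_fun.dim (cut_row V E X ` X) \<le> card (cut_row V E X ` X)"
    using assms by (intro bit_fun.dim_le_card[OF bit_fun.span_superset]) simp
  also have "\<dots> \<le> card X" using assms by (rule card_image_le)
  finally show ?thesis unfolding cut_rank_eq_dim .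
qed

lemma card_UNIV_bit: "card (UNIV :: bit set) = 2"
proof -
  have "(UNIV :: bit set) = {0, 1}" by (auto intro: bit.exhaust)
  moreover have "card {0 :: bit, 1} = 2" by simp
  ultimately show ?thesis by simp
qed

lemma card_le_two_pow_if_subset_image_PiE:
  assumes "finite B" "A \<subseteq> g ` (B \<rightarrow>\<^sub>E (UNIV :: bit set))"
  shows "card A \<le> 2 ^ card B"
proof -
  have fin: "finite (B \<rightarrow>\<^sub>E (UNIV :: bit set))"
    using assms(1) card_UNIV_bit by (intro finite_PiE) (auto intro: card_ge_0_finite)
  have "card A \<le> card (g ` (B \<rightarrow>\<^sub>E (UNIV :: bit set)))"
    using assms(2) fin by (intro card_mono finite_imageI)
  also have "\<dots> \<le> card (B \<rightarrow>\<^sub>E (UNIV :: bit set))" using fin by (rule card_image_le)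
  also have "\<dots> = 2 ^ card B" using assms(1) by (simp add: card_PiE card_UNIV_bit)
  finally show ?thesis .
qed

lemma sum_fun_apply: "(\<Sum>a\<in>A. f a) x = (\<Sum>a\<in>A. f a x)"
  by (induction A rule: infinite_finite_induct) auto

lemma bit_fun_basis_coordinates:
  assumes "finite W"
  obtains B where "card B = bit_fun.dim W" "finite B"
    "\<And>w. w \<in> W \<Longrightarrow> \<exists>u. w = (\<lambda>y. \<Sum>b\<in>B. u b * b y)"
proof -
  obtain B where B: "B \<subseteq> W" "bit_fun.independent B" "W \<subseteq> bit_fun.span B"
    "card B = bit_fun.dim W"
    using bit_fun.basis_exists by blast
  have finB: "finite B" using B(1) assms finite_subset by blast
  have "\<exists>u. w = (\<lambda>y. \<Sum>b\<in>B. u b * b y)" if "w \<in> W" for w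
  proof -
    have "w \<in> bit_fun.span B" using that B(3) by blast
    then have "w \<in> range (\<lambda>u. \<Sum>b\<in>B. (\<lambda>y. u b * b y))"
      by (simp only: bit_fun.span_finite[OF finB])
    then obtain u where "w = (\<Sum>b\<in>B. (\<lambda>y. u b * b y))" by blast
    then have "w = (\<lambda>y. \<Sum>b\<in>B. u b * b y)" by (simp only: fun_eq_iff sum_fun_apply) simp
    then show ?thesis by blast
  qed
  then show ?thesis using that B finB by blast
qed

lemma card_cut_rows_le:
  assumes "finite X"
  shows "card (cut_row V E X ` X) \<le> 2 ^ cut_rank V E X"
proof -
  have fin_rows: "finite (cut_row V E X ` X)" using assms(1) by simp
  obtain B where B: "card B = cut_rank V E X" "finite B"
    "\<And>w. w \<in> cut_row V E X ` X \<Longrightarrow> \<exists>u. w = (\<lambda>y. \<Sum>b\<in>B. u b * b y)"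
    unfolding cut_rank_eq_dim by (fact bit_fun_basis_coordinates[OF fin_rows])
  let ?g = "\<lambda>u. \<lambda>y. \<Sum>b\<in>B. u b * b y"
  have "w \<in> ?g ` (B \<rightarrow>\<^sub>E UNIV)" if w: "w \<in> cut_row V E X ` X" for w
  proof -
    obtain u where u: "w = ?g u" using B(3)[OF w] by blast
    have "?g u = ?g (restrict u B)" by (rule ext, rule sum.cong[OF refl]) (simp only: restrict_apply')
    then show ?thesis using u by (intro image_eqI[of _ _ "restrict u B"]) simp_all
  qed
  then have "cut_row V E X ` X \<subseteq> ?g ` (B \<rightarrow>\<^sub>E UNIV)" by blast
  from card_le_two_pow_if_subset_image_PiE[OF B(2) this] show ?thesis unfolding B(1) .
qed

lemma card_cut_rows_compl_le:
  assumes "finite X" "X \<subseteq> V" and sym: "\<And>x y. E x y \<Longrightarrow> E y x"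
  shows "card (cut_row V E (V - X) ` (V - X)) \<le> 2 ^ cut_rank V E X"
proof -
  have fin_rows: "finite (cut_row V E X ` X)" using assms(1) by simp
  obtain B where B: "card B = cut_rank V E X" "finite B"
    "\<And>w. w \<in> cut_row V E X ` X \<Longrightarrow> \<exists>u. w = (\<lambda>y. \<Sum>b\<in>B. u b * b y)"
    unfolding cut_rank_eq_dim by (fact bit_fun_basis_coordinates[OF fin_rows])
  obtain U where U: "\<And>z. z \<in> X \<Longrightarrow> cut_row V E X z = (\<lambda>y. \<Sum>b\<in>B. U z b * b y)"
    using bchoice[of X "\<lambda>z u. cut_row V E X z = (\<lambda>y. \<Sum>b\<in>B. u b * b y)"] B(3) by blast
  \<comment> \<open>By symmetry the entry of column \<open>c\<close> in row \<open>z\<close> is a fixed combination of the entries of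
    the basis rows at \<open>c\<close>, so a column is determined by those \<open>card B\<close> bits.\<close>
  let ?g = "\<lambda>u. \<lambda>z. if z \<in> X then (\<Sum>b\<in>B. U z b * u b) else (0::bit)"
  have column: "cut_row V E (V - X) c = ?g (restrict (\<lambda>b. b c) B)" if c: "c \<in> V - X" for c
  proof
    fix z
    show "cut_row V E (V - X) c z = ?g (restrict (\<lambda>b. b c) B) z"
    proof (cases "z \<in> X")
      case True
      have "cut_row V E X z c = (\<Sum>b\<in>B. U z b * b c)" using U[OF True] by simp
      moreover have "cut_row V E X z c = cut_row V E (V - X) c z"
        using c True assms(2) sym unfolding cut_row_def by auto
      ultimately show ?thesis using True by simp
    qed (simp add: cut_row_def)
  qed
  have "cut_row V E (V - X) ` (V - X) \<subseteq> ?g ` (B \<rightarrow>\<^sub>E UNIV)"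
  proof
    fix w assume "w \<in> cut_row V E (V - X) ` (V - X)"
    then obtain c where "c \<in> V - X" "w = cut_row V E (V - X) c" by blast
    then show "w \<in> ?g ` (B \<rightarrow>\<^sub>E UNIV)"
      using column by (intro image_eqI[of _ _ "restrict (\<lambda>b. b c) B"]) auto
  qed
  from card_le_two_pow_if_subset_image_PiE[OF B(2) this] show ?thesis unfolding B(1) .
qed

section \<open>Ramsey numbers, treewidth and rank-width\<close>

lemma ramsey_number_nat:
  assumes "simple_graph (V :: nat set) E" "ramsey_number t \<le> card V"
  shows "\<exists>S\<subseteq>V. card S = t \<and> (is_clique E S \<or> is_stable E S)"
proof -
  let ?P = "\<lambda>n. \<forall>(V :: nat set) E. simple_graph V E \<and> card V \<ge> n \<longrightarrow>
              (\<exists>S\<subseteq>V. card S = t \<and> (is_clique E S \<or> is_stable E S))"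
  obtain r where r: "\<forall>(V :: nat set) Es. finite V \<and> card V \<ge> r \<longrightarrow>
      (\<exists>S\<subseteq>V. card S = t \<and> clique S Es \<or> card S = t \<and> indep S Es)"
    using ramsey2[of t t] by blast
  have "?P r"
  proof (intro allI impI)
    fix V :: "nat set" and E assume V: "simple_graph V E \<and> r \<le> card V"
    then have fin: "finite V" and irrefl: "\<And>x y. E x y \<Longrightarrow> x \<noteq> y" and sym: "\<And>x y. E x y \<Longrightarrow> E y x"
      unfolding simple_graph_def by blast+
    define Es where "Es = {{x, y} | x y. E x y}"
    obtain S where S: "S \<subseteq> V" "card S = t \<and> clique S Es \<or> card S = t \<and> indep S Es"
      using r fin V by blast
    have "is_clique E S" if clq: "clique S Es"
      unfolding is_clique_def
    proof (intro ballI impI)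
      fix x y assume "x \<in> S" "y \<in> S" "x \<noteq> y"
      then obtain a b where "{x, y} = {a, b}" "E a b" using clq unfolding clique_def Es_def by blast
      then show "E x y" using sym by (metis doubleton_eq_iff)
    qed
    moreover have "is_stable E S" if "indep S Es"
      unfolding is_stable_def using that irrefl unfolding indep_def Es_def by blast
    ultimately show "\<exists>S\<subseteq>V. card S = t \<and> (is_clique E S \<or> is_stable E S)" using S by blast
  qed
  then have "?P (ramsey_number t)" unfolding ramsey_number_def by (rule LeastI)
  then show ?thesis using assms by blast
qed

lemma ramsey_number_ge: "t \<le> ramsey_number t"
proof -
  have "simple_graph {..<ramsey_number t} (\<lambda>_ _. False)" unfolding simple_graph_def by simp
  from ramsey_number_nat[OF this] obtain S where "S \<subseteq> {..<ramsey_number t}" "card S = t"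
    by auto
  then show ?thesis by (metis card_lessThan card_mono finite_lessThan)
qed

lemma ramsey_number_clique_or_stable:
  assumes G: "simple_graph V E" and C: "C \<subseteq> V" "ramsey_number t \<le> card C"
  shows "\<exists>S\<subseteq>C. card S = t \<and> (is_clique E S \<or> is_stable E S)"
proof -
  have "finite C" using G C(1) finite_subset unfolding simple_graph_def by blast
  then obtain g where g: "bij_betw g {0..<card C} C" using ex_bij_betw_nat_finite by blast
  define E' where "E' i j \<longleftrightarrow> i < card C \<and> j < card C \<and> E (g i) (g j)" for i j
  have "simple_graph {0..<card C} E'"
    using G unfolding simple_graph_def E'_def by (metis atLeastLessThan_iff finite_atLeastLessThan zero_le)
  from ramsey_number_nat[OF this] obtain S' where
    S': "S' \<subseteq> {0..<card C}" "card S' = t" "is_clique E' S' \<or> is_stable E' S'"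
    using C(2) by auto
  have inj: "inj_on g S'" using bij_betw_imp_inj_on[OF g] S'(1) inj_on_subset by blast
  have "is_clique E (g ` S') \<or> is_stable E (g ` S')"
    using S'(1,3) inj unfolding is_clique_def is_stable_def E'_def inj_on_def by (auto simp: subset_iff)
  moreover have "g ` S' \<subseteq> C" using S'(1) bij_betw_imp_surj_on[OF g] by blast
  ultimately show ?thesis using card_image[OF inj] S'(2) by blast
qed

lemma treewidth_le_td_width:
  assumes "is_tree_decomposition V E N F bag" "finite V"
  shows "treewidth V E \<le> td_width N bag"
proof -
  let ?W = "{td_width N bag | N F bag. is_tree_decomposition V E N F bag}"
  have "?W \<subseteq> {-1..int (card V)}"
  proof
    fix w assume "w \<in> ?W"
    then obtain N' F' bag' where w: "w = td_width N' bag'" "is_tree_decomposition V E N' F' bag'"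
      by blast
    have N': "finite N'" "N' \<noteq> {}" using w(2) unfolding is_tree_decomposition_def is_tree_def by blast+
    have "\<forall>x\<in>N'. bag' x \<subseteq> V" using w(2) unfolding is_tree_decomposition_def by blast
    then have "\<forall>x\<in>N'. card (bag' x) \<le> card V" using card_mono[OF assms(2)] by blast
    then have "Max ((\<lambda>x. card (bag' x)) ` N') \<le> card V" using N' by (simp add: Max_le_iff)
    then show "w \<in> {-1..int (card V)}" unfolding w(1) td_width_def by simp
  qed
  then have "finite ?W" by (rule finite_subset) simp
  moreover have "td_width N bag \<in> ?W" using assms(1) by blast
  ultimately show ?thesis unfolding treewidth_def by (rule Min_le)
qed

lemma treewidth_le_card:
  assumes "simple_graph V E"
  shows "treewidth V E \<le> int (card V) - 1"
proof -
  have "is_tree {0} {}" unfolding is_tree_def by simp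
  then have "is_tree_decomposition V E {0} {} (\<lambda>_. V)"
    using assms unfolding is_tree_decomposition_def tree_connected_subset_def simple_graph_def
    by auto
  then have "treewidth V E \<le> td_width {0} (\<lambda>_. V)"
    using assms unfolding simple_graph_def by (blast intro: treewidth_le_td_width)
  then show ?thesis unfolding td_width_def by simp
qed

lemma rankwidth_attained:
  assumes V: "finite V" "card V \<ge> 2"
  shows "\<exists>N F (L :: 'a \<Rightarrow> nat). is_rank_decomposition V N F L \<and> rd_width V E F L = rankwidth V E"
proof -
  let ?W = "{rd_width V E F L | N F (L :: 'a \<Rightarrow> nat). is_rank_decomposition V N F L}"
  have "rd_width V E F L \<le> card V" if "is_rank_decomposition V N F L" for N F L
  proof -
    have T: "is_tree N F" "card N \<ge> 2" using that unfolding is_rank_decomposition_def by blast+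
    then have "F \<noteq> {}" unfolding is_tree_def by auto
    moreover have "cut_rank V E X \<le> card V" if "X \<subseteq> V" for X
      using cut_rank_le_card[of X V E] card_mono[OF V(1) that] finite_subset[OF that V(1)] by linarith
    ultimately show ?thesis
      unfolding rd_width_def using finite_tree_edges[OF T(1)] by (simp add: Max_le_iff)
  qed
  then have "?W \<subseteq> {..card V}" by auto
  then have "finite ?W" by (rule finite_subset) simp
  moreover have "?W \<noteq> {}" using rank_decomposition_exists[OF V] by blast
  ultimately have "Min ?W \<in> ?W" by (rule Min_in)
  then obtain N F L where "Min ?W = rd_width V E F L" "is_rank_decomposition V N F L" by blast
  moreover have "rankwidth V E = Min ?W" unfolding rankwidth_def using V(2) by simp
  ultimately show ?thesis by metis
qed

section \<open>The tree decomposition\<close>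

lemma card_le_card_image_mult:
  assumes "finite S" "\<And>v. v \<in> S \<Longrightarrow> card {w\<in>S. f w = f v} \<le> m"
  shows "card S \<le> card (f ` S) * m"
proof -
  have "card S = card (\<Union>y\<in>f ` S. {w\<in>S. f w = y})" by (rule arg_cong[of _ _ card]) blast
  also have "\<dots> \<le> (\<Sum>y\<in>f ` S. card {w\<in>S. f w = y})"
    by (rule card_UN_le) (use assms(1) in simp)
  also have "\<dots> \<le> (\<Sum>y\<in>f ` S. m)" using assms(2) by (intro sum_mono) auto
  finally show ?thesis by simp
qed

locale Kt_Ktt_free_rank_decomposition =
  fixes V :: "'a set" and E :: "'a \<Rightarrow> 'a \<Rightarrow> bool" and t k :: nat
    and N :: "nat set" and F :: "nat set set" and L :: "'a \<Rightarrow> nat"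
  assumes graph: "simple_graph V E"
    and rank_decomposition: "is_rank_decomposition V N F L"
    and width: "rd_width V E F L \<le> k"
    and no_Kt: "\<not> has_induced_Kt V E t"
    and no_Ktt: "\<not> has_induced_Ktt V E t"
begin

lemma finite_V: "finite V"
  using graph unfolding simple_graph_def by blast

lemma adj_sym: "E x y \<Longrightarrow> E y x"
  using graph unfolding simple_graph_def by blast

lemma adj_in_V: "E x y \<Longrightarrow> x \<in> V \<and> y \<in> V"
  using graph unfolding simple_graph_def by blast

lemma tree: "is_tree N F"
  using rank_decomposition unfolding is_rank_decomposition_def by blast

lemma leaf_in_N: "v \<in> V \<Longrightarrow> L v \<in> N"
  using rank_decomposition unfolding is_rank_decomposition_def bij_betw_def tree_leaves_def by blast

lemma cut_rank_tree_side_le: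
  assumes "e \<in> F"
  shows "cut_rank V E {v\<in>V. L v \<in> tree_side F e (SOME a. a \<in> e)} \<le> k"
proof -
  have "cut_rank V E {v\<in>V. L v \<in> tree_side F e (SOME a. a \<in> e)} \<le> rd_width V E F L"
    unfolding rd_width_def using finite_tree_edges[OF tree] assms by (intro Max_ge) auto
  then show ?thesis using width by linarith
qed

definition side :: "nat set \<Rightarrow> 'a \<Rightarrow> 'a set" where
  "side e v = {w\<in>V. L w \<in> tree_side F e (L v)}"

definition twin_class :: "nat set \<Rightarrow> 'a \<Rightarrow> 'a set" where
  "twin_class e v = {w\<in>side e v. cut_row V E (side e v) w = cut_row V E (side e v) v}"

definition small :: "nat set \<Rightarrow> 'a \<Rightarrow> bool" where
  "small e v \<longleftrightarrow> card (twin_class e v) < ramsey_number t"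

definition subtree :: "'a \<Rightarrow> nat set" where
  "subtree v = {x\<in>N. \<forall>e\<in>separating_edges F (L v) x. small e v}"

definition bag :: "nat \<Rightarrow> 'a set" where
  "bag x = {v\<in>V. x \<in> subtree v}"

lemma twin_class_subset: "twin_class e v \<subseteq> V"
  unfolding twin_class_def side_def by blast

lemma stable_subset_if_not_small:
  assumes "\<not> small e v"
  obtains S where "S \<subseteq> twin_class e v" "card S = t" "is_stable E S"
proof -
  obtain S where S: "S \<subseteq> twin_class e v" "card S = t" "is_clique E S \<or> is_stable E S"
    using ramsey_number_clique_or_stable[OF graph twin_class_subset] assms
    unfolding small_def not_less by blast
  moreover have "\<not> is_clique E S"
    using no_Kt S(1,2) twin_class_subset unfolding has_induced_Kt_def by blast
  ultimately show ?thesis using that by blast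
qed

lemma small_or_small:
  assumes uv: "E u v" and sep: "(L u, L v) \<notin> reach_without F e"
  shows "small e u \<or> small e v"
proof (rule ccontr)
  assume "\<not> (small e u \<or> small e v)"
  then have "\<not> small e u" "\<not> small e v" by auto
  obtain S1 where S1: "S1 \<subseteq> twin_class e u" "card S1 = t" "is_stable E S1"
    using stable_subset_if_not_small[OF \<open>\<not> small e u\<close>] by blast
  obtain S2 where S2: "S2 \<subseteq> twin_class e v" "card S2 = t" "is_stable E S2"
    using stable_subset_if_not_small[OF \<open>\<not> small e v\<close>] by blast
  have disjoint: "side e u \<inter> side e v = {}"
  proof (rule ccontr)
    assume "side e u \<inter> side e v \<noteq> {}"
    then obtain w where "(L u, L w) \<in> reach_without F e" "(L w, L v) \<in> reach_without F e"
      unfolding side_def tree_side_def using tree_reach_sym by blast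
    then show False using sep rtrancl_trans[of "L u" "L w" _ "L v"] by blast
  qed
  have v: "v \<in> V - side e u"
    using adj_in_V[OF uv] sep unfolding side_def tree_side_def by blast
  \<comment> \<open>Twins of \<open>u\<close> see \<open>v\<close>, hence twins of \<open>v\<close> see them: \<open>S1\<close> and \<open>S2\<close> induce \<open>K\<^sub>t\<^sub>,\<^sub>t\<close>.\<close>
  have "E a b" if a: "a \<in> S1" and b: "b \<in> S2" for a b
  proof -
    have "cut_row V E (side e u) a = cut_row V E (side e u) u"
      using a S1(1) unfolding twin_class_def by blast
    then have av: "E a v" using v uv by (rule cut_row_eq_adj)
    have "cut_row V E (side e v) b = cut_row V E (side e v) v"
      using b S2(1) unfolding twin_class_def by blast
    moreover have "a \<in> V - side e v"
      using a S1(1) disjoint unfolding twin_class_def side_def by blast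
    ultimately have "E b a" using adj_sym[OF av] by (rule cut_row_eq_adj)
    then show ?thesis by (rule adj_sym)
  qed
  moreover have "S1 \<inter> S2 = {}" "S1 \<subseteq> V" "S2 \<subseteq> V"
    using S1(1) S2(1) disjoint twin_class_subset unfolding twin_class_def by blast+
  ultimately have "has_induced_Ktt V E t"
    unfolding has_induced_Ktt_def using S1(2,3) S2(2,3) by blast
  then show False using no_Ktt by blast
qed

lemma small_if_side_subset:
  assumes sides: "side f v \<subseteq> side e v" and "small e v"
  shows "small f v"
proof -
  have "twin_class f v \<subseteq> twin_class e v"
  proof
    fix w assume "w \<in> twin_class f v"
    then have "w \<in> side e v" "cut_row V E (side f v) w = cut_row V E (side f v) v"
      using sides unfolding twin_class_def by auto
    moreover have "cut_row V E (side e v) w z = cut_row V E (side e v) v z" for z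
      using fun_cong[OF calculation(2), of z] sides unfolding cut_row_def by (auto split: if_splits)
    ultimately show "w \<in> twin_class e v" unfolding twin_class_def by blast
  qed
  then have "card (twin_class f v) \<le> card (twin_class e v)"
    using finite_subset[OF twin_class_subset finite_V] by (rule card_mono[rotated])
  then show ?thesis using assms(2) unfolding small_def by simp
qed

lemma mem_subtree_if_small_edge:
  assumes e: "{a, b} \<in> F" "a \<noteq> b" and a: "a \<in> N" and small: "small {a, b} v"
  shows "a \<in> subtree v"
  unfolding subtree_def
proof (intro CollectI conjI ballI)
  fix h assume h: "h \<in> separating_edges F (L v) a"
  show "small h v"
  proof (cases "h = {a, b}")
    case False
    have "a \<notin> tree_side F h (L v)" using h unfolding separating_edges_def tree_side_def by blast
    then have "tree_side F h (L v) \<subseteq> tree_side F {a, b} (L v)"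
      using tree_side_nested[OF e] False by blast
    then have "side h v \<subseteq> side {a, b} v" unfolding side_def by blast
    then show ?thesis using small by (rule small_if_side_subset)
  qed (use small in simp)
qed (rule a)

lemma mem_subtree_if_nearer_edges_small:
  assumes ab: "{a, b} \<in> F" "a \<noteq> b" "(L u, a) \<in> reach_without F {a, b}" and a: "a \<in> N"
    and nearer_small: "\<And>g. g \<in> F \<Longrightarrow> tree_side F g (L u) \<subset> tree_side F {a, b} (L u) \<Longrightarrow> small g u"
  shows "a \<in> subtree u"
  unfolding subtree_def
proof (intro CollectI conjI ballI)
  fix g assume g: "g \<in> separating_edges F (L u) a"
  then have "g \<in> F" unfolding separating_edges_def by blast
  then show "small g u" using nearer_small tree_side_psubset_if_separating[OF ab g] by blast
qed (rule a)

text \<open>On the path from the leaf \<open>p\<close> of \<open>u\<close> to the leaf of \<open>v\<close>, the node \<open>a\<close> just before the first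
  edge that is not small for \<open>u\<close> lies in both subtrees.\<close>

lemma edge_in_common_bag:
  assumes uv: "E u v"
  shows "\<exists>x\<in>N. u \<in> bag x \<and> v \<in> bag x"
proof -
  have u: "u \<in> V" and v: "v \<in> V" using adj_in_V[OF uv] by auto
  define p where "p = L u"
  define q where "q = L v"
  have p: "p \<in> N" and q: "q \<in> N" using leaf_in_N u v unfolding p_def q_def by auto
  define X where "X = {e \<in> separating_edges F p q. \<not> small e u}"
  show ?thesis
  proof (cases "X = {}")
    case True
    then have "q \<in> subtree u" unfolding subtree_def X_def p_def using q by blast
    moreover have "q \<in> subtree v" using q unfolding subtree_def separating_edges_def q_def by simp
    ultimately show ?thesis using u v q unfolding bag_def by blast
  next
    case False
    then obtain es where es: "es \<in> X"
      and es_min: "\<And>g. g \<in> X \<Longrightarrow> card (tree_side F es p) \<le> card (tree_side F g p)"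
      using ex_has_least_nat[of "\<lambda>g. g \<in> X" _ "\<lambda>g. card (tree_side F g p)"] by blast
    have esF: "es \<in> F" and es_sep: "q \<notin> tree_side F es p" and "\<not> small es u"
      using es unfolding X_def separating_edges_def tree_side_def by auto
    then have small_v: "small es v"
      using small_or_small[OF uv] unfolding p_def q_def tree_side_def by blast
    obtain a b where ab: "es = {a, b}" "a \<noteq> b" "(p, a) \<in> reach_without F es"
      using tree_edge_orientE[OF tree esF p] .
    have a: "a \<in> N" using tree_edges_subset_Pow[OF tree] esF ab(1) by auto
    have "small g u" if g: "g \<in> F" and psub: "tree_side F g p \<subset> tree_side F es p" for g
    proof -
      have "q \<notin> tree_side F g p" using psub es_sep by blast
      then have "g \<in> separating_edges F p q"
        using g unfolding separating_edges_def tree_side_def by blast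
      moreover have "card (tree_side F g p) < card (tree_side F es p)"
        using psubset_card_mono[OF finite_tree_side[OF tree p] psub] .
      then have "g \<notin> X" using es_min by fastforce
      ultimately show ?thesis unfolding X_def by blast
    qed
    then have "a \<in> subtree u"
      using mem_subtree_if_nearer_edges_small[of a b u] esF ab a unfolding p_def by blast
    moreover have "a \<in> subtree v"
      using mem_subtree_if_small_edge[OF _ ab(2) a] esF small_v ab(1) by blast
    ultimately show ?thesis using u v a unfolding bag_def by blast
  qed
qed

lemma side_eq_if_in_tree_side:
  assumes "L v \<in> tree_side F e y"
  shows "side e v = {w\<in>V. L w \<in> tree_side F e y}"
proof -
  have yv: "(y, L v) \<in> reach_without F e" and vy: "(L v, y) \<in> reach_without F e"
    using assms tree_reach_sym unfolding tree_side_def by blast+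
  have "tree_side F e (L v) = tree_side F e y"
    unfolding tree_side_def using rtrancl_trans[OF yv] rtrancl_trans[OF vy] by blast
  then show ?thesis unfolding side_def by simp
qed

lemma card_cut_rows_tree_side_le:
  assumes e: "{x, y} \<in> F" "x \<noteq> y"
  defines "A \<equiv> {w\<in>V. L w \<in> tree_side F {x, y} y}"
  shows "card (cut_row V E A ` A) \<le> 2 ^ k"
proof -
  \<comment> \<open>The width of \<open>{x, y}\<close> is measured on the side of an arbitrary endpoint; either way it
    bounds the number of distinct rows of \<open>A\<close>, by symmetry of cut-rank.\<close>
  define a0 where "a0 = (SOME a. a \<in> {x, y})"
  define X0 where "X0 = {v\<in>V. L v \<in> tree_side F {x, y} a0}"
  have "(2::nat) ^ cut_rank V E X0 \<le> 2 ^ k"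
    using cut_rank_tree_side_le[OF e(1)] unfolding X0_def a0_def by (simp add: power_increasing)
  moreover have "a0 \<in> {x, y}" unfolding a0_def by (rule someI[of _ x]) simp
  moreover have "card (cut_row V E A ` A) \<le> 2 ^ cut_rank V E X0" if "a0 = y"
    using card_cut_rows_le[of X0 V E] finite_V that unfolding A_def X0_def by simp
  moreover have "card (cut_row V E A ` A) \<le> 2 ^ cut_rank V E X0" if "a0 = x"
  proof -
    have "L w \<in> tree_side F {x, y} x \<longleftrightarrow> L w \<notin> tree_side F {x, y} y" if w: "w \<in> V" for w
    proof -
      have "(x, L w) \<in> reach_without F {x, y} \<or> (y, L w) \<in> reach_without F {x, y}"
        using tree_remove_edge_reaches_endpoint[OF tree e(1) leaf_in_N[OF w]] .
      moreover have "\<not> ((x, L w) \<in> reach_without F {x, y} \<and> (y, L w) \<in> reach_without F {x, y})"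
      proof
        assume "(x, L w) \<in> reach_without F {x, y} \<and> (y, L w) \<in> reach_without F {x, y}"
        then have "(x, y) \<in> reach_without F {x, y}"
          using tree_reach_sym rtrancl_trans[of x "L w" _ y] by blast
        then show False using tree_remove_edge_separates[OF tree e] by blast
      qed
      ultimately show ?thesis unfolding tree_side_def by blast
    qed
    then have "A = V - X0" unfolding A_def X0_def \<open>a0 = x\<close> by blast
    then show ?thesis
      using card_cut_rows_compl_le[of X0 V E] finite_V adj_sym unfolding X0_def by auto
  qed
  ultimately show ?thesis by (auto intro: order_trans)
qed

lemma card_small_beyond_edge_le:
  assumes e: "{x, y} \<in> F" "x \<noteq> y"
  shows "card {v\<in>V. L v \<in> tree_side F {x, y} y \<and> small {x, y} v} \<le> (ramsey_number t - 1) * 2 ^ k"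
proof -
  define A where "A = {w\<in>V. L w \<in> tree_side F {x, y} y}"
  define P where "P = {v\<in>V. L v \<in> tree_side F {x, y} y \<and> small {x, y} v}"
  have finite_P: "finite P" unfolding P_def using finite_V by simp
  have "card {w\<in>P. cut_row V E A w = cut_row V E A v} \<le> ramsey_number t - 1" if v: "v \<in> P" for v
  proof -
    have "side {x, y} v = A"
      using v side_eq_if_in_tree_side unfolding P_def A_def by blast
    then have "{w\<in>P. cut_row V E A w = cut_row V E A v} \<subseteq> twin_class {x, y} v"
      unfolding twin_class_def P_def A_def by auto
    then have "card {w\<in>P. cut_row V E A w = cut_row V E A v} \<le> card (twin_class {x, y} v)"
      using finite_subset[OF twin_class_subset finite_V] by (rule card_mono[rotated])
    moreover have "small {x, y} v" using v unfolding P_def by blast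
    ultimately show ?thesis unfolding small_def by linarith
  qed
  then have "card P \<le> card (cut_row V E A ` P) * (ramsey_number t - 1)"
    using finite_P by (rule card_le_card_image_mult[rotated])
  also have "card (cut_row V E A ` P) \<le> card (cut_row V E A ` A)"
    using finite_V unfolding A_def P_def by (intro card_mono image_mono) auto
  also have "\<dots> \<le> 2 ^ k" unfolding A_def by (rule card_cut_rows_tree_side_le[OF e])
  finally show ?thesis unfolding P_def by (simp add: mult.commute)
qed

lemma bag_subset:
  assumes x: "x \<in> N"
  shows "bag x \<subseteq> {v\<in>V. L v = x} \<union> (\<Union>e\<in>{e\<in>F. x \<in> e}. {v\<in>V. L v \<notin> tree_side F e x \<and> small e v})"
proof
  fix v assume "v \<in> bag x"
  then have v: "v \<in> V" "x \<in> subtree v" unfolding bag_def by auto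
  show "v \<in> {v\<in>V. L v = x} \<union> (\<Union>e\<in>{e\<in>F. x \<in> e}. {v\<in>V. L v \<notin> tree_side F e x \<and> small e v})"
  proof (cases "L v = x")
    case False
    then obtain e where e: "e \<in> F" "x \<in> e" "(x, L v) \<notin> reach_without F e"
      using separating_edge_atE[OF tree x leaf_in_N[OF v(1)]] by metis
    then have "e \<in> separating_edges F (L v) x"
      unfolding separating_edges_def using tree_reach_sym by blast
    then have "small e v" using v(2) unfolding subtree_def by blast
    then show ?thesis using e v(1) unfolding tree_side_def by blast
  qed (use v in blast)
qed

lemma card_bag_le:
  assumes x: "x \<in> N"
  shows "card (bag x) \<le> 1 + 3 * ((ramsey_number t - 1) * 2 ^ k)"
proof -
  let ?m = "(ramsey_number t - 1) * 2 ^ k"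
  define Ex where "Ex = {e\<in>F. x \<in> e}"
  define S where "S e = {v\<in>V. L v \<notin> tree_side F e x \<and> small e v}" for e
  have card_leaf: "card {v\<in>V. L v = x} \<le> 1"
    using rank_decomposition finite_V unfolding is_rank_decomposition_def bij_betw_def inj_on_def
    by (simp add: card_le_Suc0_iff_eq)
  have card_S: "card (S e) \<le> ?m" if e: "e \<in> Ex" for e
  proof -
    have eF: "e \<in> F" "x \<in> e" using e unfolding Ex_def by auto
    obtain y where y: "e = {x, y}" "x \<noteq> y" using tree_edge_other_endE[OF tree eF] by blast
    have "S e \<subseteq> {v\<in>V. L v \<in> tree_side F {x, y} y \<and> small {x, y} v}"
      using tree_remove_edge_reaches_endpoint[OF tree eF(1)[unfolded y(1)] leaf_in_N]
      unfolding S_def y(1) tree_side_def by blast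
    then have "card (S e) \<le> card {v\<in>V. L v \<in> tree_side F {x, y} y \<and> small {x, y} v}"
      using finite_V by (intro card_mono) auto
    also have "\<dots> \<le> ?m" using card_small_beyond_edge_le eF(1) y by simp
    finally show ?thesis .
  qed
  have finite_Ex: "finite Ex" unfolding Ex_def using finite_tree_edges[OF tree] by simp
  have "card (\<Union>e\<in>Ex. S e) \<le> (\<Sum>e\<in>Ex. card (S e))" by (rule card_UN_le[OF finite_Ex])
  also have "\<dots> \<le> card Ex * ?m" using sum_bounded_above[of Ex "\<lambda>e. card (S e)"] card_S by simp
  also have "\<dots> \<le> 3 * ?m"
    using rank_decomposition x unfolding is_rank_decomposition_def tree_degree_def Ex_def by simp
  finally have card_far: "card (\<Union>e\<in>Ex. S e) \<le> 3 * ?m" .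
  have "card (bag x) \<le> card ({v\<in>V. L v = x} \<union> (\<Union>e\<in>Ex. S e))"
    using bag_subset[OF x] finite_V finite_Ex unfolding Ex_def S_def by (intro card_mono) simp_all
  also have "\<dots> \<le> card {v\<in>V. L v = x} + card (\<Union>e\<in>Ex. S e)" by (rule card_Un_le)
  finally show ?thesis using card_leaf card_far by linarith
qed

lemma is_tree_decomposition_bag: "is_tree_decomposition V E N F bag"
  unfolding is_tree_decomposition_def
proof (intro conjI ballI allI impI)
  show "is_tree N F" by (rule tree)
next
  fix x assume "x \<in> N"
  then show "bag x \<subseteq> V" unfolding bag_def by blast
next
  fix v assume v: "v \<in> V"
  then have "L v \<in> subtree v" using leaf_in_N unfolding subtree_def separating_edges_def by simp
  then show "\<exists>x\<in>N. v \<in> bag x" using v leaf_in_N unfolding bag_def by blast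
next
  fix u v assume "E u v"
  then show "\<exists>x\<in>N. u \<in> bag x \<and> v \<in> bag x" by (rule edge_in_common_bag)
next
  fix v assume v: "v \<in> V"
  have "{x\<in>N. v \<in> bag x} = subtree v" using v unfolding bag_def subtree_def by blast
  then show "tree_connected_subset F {x\<in>N. v \<in> bag x}"
    unfolding subtree_def using tree_connected_subset_separating_edges[OF tree leaf_in_N[OF v]] by simp
qed

theorem treewidth_le: "treewidth V E \<le> int (3 * (ramsey_number t - 1) * 2 ^ k)"
proof -
  let ?m = "3 * (ramsey_number t - 1) * 2 ^ k"
  have "N \<noteq> {}" "finite N" using tree unfolding is_tree_def by blast+
  then have "Max ((\<lambda>x. card (bag x)) ` N) \<le> 1 + ?m"
    using card_bag_le by (simp add: Max_le_iff mult.assoc)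
  then have "int (Max ((\<lambda>x. card (bag x)) ` N)) \<le> 1 + int ?m"
    by (metis of_nat_1 of_nat_add of_nat_mono)
  then have "td_width N bag \<le> int ?m" unfolding td_width_def by linarith
  then show ?thesis using treewidth_le_td_width[OF is_tree_decomposition_bag finite_V] by linarith
qed

end

lemma treewidth_le_ramsey_rankwidth:
  assumes G: "simple_graph V E" and "\<not> has_induced_Kt V E t" "\<not> has_induced_Ktt V E t"
  shows "treewidth V E \<le> int (3 * (ramsey_number t - 1) * 2 ^ rankwidth V E)"
proof (cases "card V \<le> 1")
  case True
  then show ?thesis using treewidth_le_card[OF G] by linarith
next
  case False
  have "finite V" "2 \<le> card V" using G False unfolding simple_graph_def by auto
  then obtain N F L where "is_rank_decomposition V N F L" "rd_width V E F L = rankwidth V E"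
    using rankwidth_attained by blast
  then interpret Kt_Ktt_free_rank_decomposition V E t "rankwidth V E" N F L
    using assms by unfold_locales simp_all
  show ?thesis by (rule treewidth_le)
qed

lemma has_induced_K1: "v \<in> V \<Longrightarrow> has_induced_Kt V E 1"
  unfolding has_induced_Kt_def is_clique_def by (intro exI[of _ "{v}"]) simp

theorem mainTheorem6:
  fixes V :: "'a set" and E :: "'a \<Rightarrow> 'a \<Rightarrow> bool" and t :: nat
  assumes "simple_graph V E"
    and "t > 0"
    and "\<not> has_induced_Kt V E t"
    and "\<not> has_induced_Ktt V E t"
  shows "treewidth V E \<le> 3 * (int (ramsey_number t) - 1) * 2 ^ (rankwidth V E + 1) - 1"
proof (cases "V = {}")
  case True
  have "1 \<le> ramsey_number t" using ramsey_number_ge[of t] assms(2) by linarith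
  then have "0 \<le> 3 * (int (ramsey_number t) - 1) * 2 ^ (rankwidth V E + 1)" by simp
  moreover have "treewidth V E \<le> -1" using treewidth_le_card[OF assms(1)] True by simp
  ultimately show ?thesis by linarith
next
  case False
  then obtain v where "v \<in> V" by blast
  then have "t \<noteq> 1" using assms(3) has_induced_K1 by metis
  then have "2 \<le> t" using assms(2) by linarith
  then have R: "2 \<le> ramsey_number t" using ramsey_number_ge[of t] by linarith
  let ?k = "rankwidth V E"
  have "1 * 1 \<le> (int (ramsey_number t) - 1) * 2 ^ ?k" using R by (intro mult_mono) simp_all
  then have "int (3 * (ramsey_number t - 1) * 2 ^ ?k) \<le> 3 * (int (ramsey_number t) - 1) * 2 ^ (?k + 1) - 1"
    using R by (simp add: of_nat_diff algebra_simps)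
  then show ?thesis using treewidth_le_ramsey_rankwidth[OF assms(1,3,4)] by linarith
qed

end
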